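(* Let $\{X_t\},\{Y_t\}$ ($t\in T$) be stochastic processes with finite second moments such that $X_t\le_{\textnormal{d-ast}}Y_t$ as $t\to\infty$. Let $\psi:\mathbb{R}\to\mathbb{R}$ be strictly decreasing and Lipschitz continuous, with $\psi(X_t)$, $\psi(Y_t)$ having finite second moments for all $t$. If there exist $C>0$ and $t_0\in T$ with $\mathcal{W}_2^2(F_{X_t},F_{Y_t})\le C\,\mathcal{W}_2^2(F_{\psi(X_t)},F_{\psi(Y_t)})$ for all $t\ge t_0$, then $\psi(Y_t)\le_{\textnormal{d-ast}}\psi(X_t)$ as $t\to\infty$.
   Context: $T\subseteq\mathbb{R}$ is unbounded above; limits along $t\in T$. $F^{-1}(u)=\inf\{x:F(x)\ge u\}$. $\mathcal{W}_2(F,G)=(\int_0^1(F^{-1}-G^{-1})^2du)^{1/2}$. $\varepsilon_{\mathcal{W}_2}(F,G)=\mathcal{W}_2^{-2}(F,G)\int_{\{u\in(0,1):F^{-1}(u)>G^{-1}(u)\}}(F^{-1}-G^{-1})^2du$, set to $0$ if $\mathcal{W}_2(F,G)=0$. $X_t\le_{\textnormal{d-ast}}Y_t$ means $\lim_{t\to\infty}\varepsilon_{\mathcal{W}_2}(F_{X_t},F_{Y_t})=0$. *)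

theory Defs
  imports "HOL-Probability.Probability"
begin

definition distfun :: "'a measure \<Rightarrow> ('a \<Rightarrow> real) \<Rightarrow> real \<Rightarrow> real" where
  "distfun M X = cdf (distr M borel X)"

definition quantile :: "(real \<Rightarrow> real) \<Rightarrow> real \<Rightarrow> real" where
  "quantile F u = Inf {x. F x \<ge> u}"

definition W2 :: "(real \<Rightarrow> real) \<Rightarrow> (real \<Rightarrow> real) \<Rightarrow> real" where
  "W2 F G = sqrt (LINT u:{0<..<1}|lborel. (quantile F u - quantile G u)\<^sup>2)"

definition eps_W2 :: "(real \<Rightarrow> real) \<Rightarrow> (real \<Rightarrow> real) \<Rightarrow> real" where
  "eps_W2 F G = (if W2 F G = 0 then 0 else
     (LINT u:{u\<in>{0<..<1}. quantile F u > quantile G u}|lborel. (quantile F u - quantile G u)\<^sup>2)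
       / (W2 F G)\<^sup>2)"

definition d_ast :: "real set \<Rightarrow> 'a measure \<Rightarrow> (real \<Rightarrow> 'a \<Rightarrow> real) \<Rightarrow> (real \<Rightarrow> 'a \<Rightarrow> real) \<Rightarrow> bool" where
  "d_ast T M X Y \<longleftrightarrow>
     ((\<lambda>t. eps_W2 (distfun M (X t)) (distfun M (Y t))) \<longlongrightarrow> 0) (inf at_top (principal T))"

end

theory Submission
  imports Defs
begin

text \<open>For a strictly decreasing \<open>\<psi>\<close> the quantile function of \<open>\<psi>(X)\<close> is
  \<open>u \<mapsto> \<psi>(F\<^sub>X\<^sup>-\<^sup>1(1 - u))\<close> outside a countable set. After the substitution
  \<open>u \<mapsto> 1 - u\<close>, the region where the quantile of \<open>\<psi>(Y)\<close> exceeds that of \<open>\<psi>(X)\<close> is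
  exactly the region where \<open>F\<^sub>X\<^sup>-\<^sup>1 > F\<^sub>Y\<^sup>-\<^sup>1\<close>, and there the Lipschitz bound gives
  \<open>(\<psi> b - \<psi> a)\<^sup>2 \<le> L\<^sup>2 (a - b)\<^sup>2\<close>. So the violation integral of the images is at most
  \<open>L\<^sup>2\<close> times the original one, while by hypothesis the squared distance of the images is at
  least \<open>1/C\<close> times the original one. Hence the index of the images is eventually at most
  \<open>L\<^sup>2 C\<close> times the original index, which tends to 0.\<close>

lemma
  assumes "real_distribution N"
  shows quantile_cdf_le_iff: "0 < u \<Longrightarrow> u < 1 \<Longrightarrow> quantile (cdf N) u \<le> x \<longleftrightarrow> u \<le> cdf N x"
    and mono_on_quantile_cdf: "mono_on {0<..<1} (quantile (cdf N))"
    and borel_measurable_quantile_cdf: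
      "quantile (cdf N) \<in> borel_measurable (restrict_space lborel {0<..<1})"
    and distr_quantile_cdf: "distr (restrict_space lborel {0<..<1}) borel (quantile (cdf N)) = N"
proof -
  interpret cdf_distribution N
    using assms by (simp add: cdf_distribution_def)
  have quantile_eq: "quantile (cdf N) = (\<lambda>u. Inf {x. u \<le> cdf N x})"
    by (simp add: quantile_def[abs_def])
  show "0 < u \<Longrightarrow> u < 1 \<Longrightarrow> quantile (cdf N) u \<le> x \<longleftrightarrow> u \<le> cdf N x"
    unfolding quantile_eq using pseudoinverse by blast
  show "mono_on {0<..<1} (quantile (cdf N))"
    unfolding quantile_eq by (rule mono_I)
  show "quantile (cdf N) \<in> borel_measurable (restrict_space lborel {0<..<1})"
    unfolding quantile_eq using measurable_CI
    by (simp add: measurable_def sets_restrict_space space_restrict_space)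
  show "distr (restrict_space lborel {0<..<1}) borel (quantile (cdf N)) = N"
    unfolding quantile_eq by (rule distr_I_eq_M)
qed

lemma set_integrable_quantile_cdf_square:
  assumes "real_distribution N" "integrable N (\<lambda>x. x\<^sup>2)"
  shows "set_integrable lborel {0<..<1} (\<lambda>u. (quantile (cdf N) u)\<^sup>2)"
proof -
  have "integrable (distr (restrict_space lborel {0<..<1}) borel (quantile (cdf N))) (\<lambda>x. x\<^sup>2)"
    using assms by (simp add: distr_quantile_cdf)
  then have "integrable (restrict_space lborel {0<..<1}) (\<lambda>u. (quantile (cdf N) u)\<^sup>2)"
    using borel_measurable_quantile_cdf[OF assms(1)] by (subst (asm) integrable_distr_eq) auto
  then show ?thesis
    by (simp add: set_integrable_def integrable_restrict_space)
qed

lemma set_integrable_quantile_cdf_diff_square: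
  assumes "real_distribution N1" "integrable N1 (\<lambda>x. x\<^sup>2)"
    and "real_distribution N2" "integrable N2 (\<lambda>x. x\<^sup>2)"
  shows "set_integrable lborel {0<..<1} (\<lambda>u. (quantile (cdf N1) u - quantile (cdf N2) u)\<^sup>2)"
proof -
  let ?a = "quantile (cdf N1)" and ?b = "quantile (cdf N2)"
  have "set_integrable lborel {0<..<1} (\<lambda>u. 2 * (?a u)\<^sup>2)"
    and "set_integrable lborel {0<..<1} (\<lambda>u. 2 * (?b u)\<^sup>2)"
    using set_integrable_quantile_cdf_square assms by simp_all
  then have bound: "set_integrable lborel {0<..<1} (\<lambda>u. 2 * (?a u)\<^sup>2 + 2 * (?b u)\<^sup>2)"
    by (rule set_integral_add(1))
  have "(\<lambda>u. (?a u - ?b u)\<^sup>2) \<in> borel_measurable (restrict_space lborel {0<..<1})"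
    using borel_measurable_quantile_cdf[OF assms(1)] borel_measurable_quantile_cdf[OF assms(3)]
    by measurable
  then have "set_borel_measurable lborel {0<..<1} (\<lambda>u. (?a u - ?b u)\<^sup>2)"
    by (simp add: set_borel_measurable_def borel_measurable_restrict_space_iff)
  moreover have "(x - y)\<^sup>2 \<le> 2 * x\<^sup>2 + 2 * y\<^sup>2" for x y :: real
    using sum_squares_ge_zero[of "x + y" 0] by (simp add: power2_eq_square algebra_simps)
  ultimately show ?thesis
    by (intro set_integrable_bound[OF bound]) auto
qed

lemma borel_measurable_antimono:
  fixes f :: "real \<Rightarrow> real"
  assumes "antimono f"
  shows "f \<in> borel_measurable borel"
proof -
  have "mono (\<lambda>x. - f x)"
    using assms by (auto simp: mono_def antimono_def)
  then have "(\<lambda>x. - (- f x)) \<in> borel_measurable borel"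
    by (intro borel_measurable_uminus borel_measurable_mono)
  then show ?thesis by simp
qed

locale real_distribution_decreasing_map = real_distribution N for N :: "real measure" +
  fixes \<psi> :: "real \<Rightarrow> real"
  assumes decreasing: "\<And>x y. x < y \<Longrightarrow> \<psi> y < \<psi> x"
begin

lemma decreasing_le_iff: "\<psi> x \<le> \<psi> y \<longleftrightarrow> y \<le> x"
  using decreasing[of x y] decreasing[of y x] by (cases x y rule: linorder_cases) auto

lemma borel_measurable_map [measurable]: "\<psi> \<in> borel_measurable borel"
  by (rule borel_measurable_antimono) (auto simp: antimono_def decreasing_le_iff)

lemma real_distribution_distr_map: "real_distribution (distr N borel \<psi>)"
  by simp

lemma cdf_distr_map: "cdf (distr N borel \<psi>) (\<psi> a) = measure N {a..}"
proof -
  have "\<psi> -` {..\<psi> a} = {a..}"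
    by (auto simp: decreasing_le_iff)
  then show ?thesis
    by (simp add: cdf_def measure_distr)
qed

lemma cdf_distr_map_le:
  assumes "b < \<psi> a"
  shows "cdf (distr N borel \<psi>) b \<le> measure N {a<..}"
proof -
  have "\<psi> -` {..b} \<subseteq> {a<..}"
    using assms by (auto simp flip: not_le) (metis decreasing_le_iff order.trans)
  then show ?thesis
    by (simp add: cdf_def measure_distr finite_measure_mono)
qed

lemma quantile_cdf_distr_map_le:
  assumes u: "0 < u" "u < 1"
  shows "quantile (cdf (distr N borel \<psi>)) u \<le> \<psi> (quantile (cdf N) (1 - u))"
proof -
  define a where "a = quantile (cdf N) (1 - u)"
  have "measure N {..<a} \<le> 1 - u"
  proof (rule tendsto_upperbound[OF cdf_at_left])
    show "\<forall>\<^sub>F x in at_left a. cdf N x \<le> 1 - u"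
    proof (rule eventually_at_leftI[of "a - 1"])
      fix x assume "x \<in> {a - 1<..<a}"
      then show "cdf N x \<le> 1 - u"
        using quantile_cdf_le_iff[OF real_distribution_axioms, of "1 - u" x] u by (auto simp: a_def)
    qed simp
  qed simp
  moreover have "measure N {a..} = 1 - measure N {..<a}"
    using prob_compl[of "{..<a}"] by (simp flip: Compl_eq_Diff_UNIV)
  ultimately have "u \<le> cdf (distr N borel \<psi>) (\<psi> a)"
    by (simp add: cdf_distr_map)
  then show ?thesis
    using quantile_cdf_le_iff[OF real_distribution_distr_map] u by (simp add: a_def)
qed

lemma quantile_cdf_distr_map_ge:
  assumes u: "0 < u" "u < u'" "u' < 1"
  shows "\<psi> (quantile (cdf N) (1 - u)) \<le> quantile (cdf (distr N borel \<psi>)) u'"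
proof (rule ccontr)
  define a where "a = quantile (cdf N) (1 - u)"
  define b where "b = quantile (cdf (distr N borel \<psi>)) u'"
  assume "\<not> \<psi> (quantile (cdf N) (1 - u)) \<le> b"
  then have "b < \<psi> a" by (simp add: a_def)
  have "u' \<le> cdf (distr N borel \<psi>) b"
    using quantile_cdf_le_iff[OF real_distribution_distr_map, of u' b] u by (simp add: b_def)
  also have "\<dots> \<le> measure N {a<..}"
    using \<open>b < \<psi> a\<close> by (rule cdf_distr_map_le)
  also have "\<dots> = 1 - cdf N a"
    using prob_compl[of "{..a}"] by (simp add: cdf_def flip: Compl_eq_Diff_UNIV)
  also have "\<dots> \<le> u"
    using quantile_cdf_le_iff[OF real_distribution_axioms, of "1 - u" a] u by (simp add: a_def)
  finally show False using u by simp
qed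

text \<open>The two bounds pinch the quantile of the image at each of its continuity points, and a
  monotone function has only countably many discontinuities.\<close>
lemma countable_quantile_cdf_distr_map_neq:
  "countable {u \<in> {0<..<1}. quantile (cdf (distr N borel \<psi>)) u \<noteq> \<psi> (quantile (cdf N) (1 - u))}"
proof -
  let ?Q = "quantile (cdf (distr N borel \<psi>))"
  have "?Q u = \<psi> (quantile (cdf N) (1 - u))"
    if u: "0 < u" "u < 1" and cont: "isCont ?Q u" for u
  proof (rule antisym)
    show "?Q u \<le> \<psi> (quantile (cdf N) (1 - u))"
      using u by (rule quantile_cdf_distr_map_le)
    show "\<psi> (quantile (cdf N) (1 - u)) \<le> ?Q u"
    proof (rule tendsto_lowerbound)
      show "(?Q \<longlongrightarrow> ?Q u) (at_right u)"
        using cont by (simp add: isCont_def filterlim_at_split)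
      show "\<forall>\<^sub>F x in at_right u. \<psi> (quantile (cdf N) (1 - u)) \<le> ?Q x"
        using quantile_cdf_distr_map_ge u by (intro eventually_at_rightI[of u 1]) auto
    qed simp
  qed
  then have "{u \<in> {0<..<1}. ?Q u \<noteq> \<psi> (quantile (cdf N) (1 - u))}
      \<subseteq> {u \<in> {0<..<1}. \<not> isCont ?Q u}"
    by auto
  moreover have "countable {u \<in> {0<..<1}. \<not> isCont ?Q u}"
    using mono_on_ctble_discont[OF mono_on_quantile_cdf[OF real_distribution_distr_map]]
    by (simp add: at_within_open[of _ "{0<..<1}"] cong: conj_cong)
  ultimately show ?thesis
    by (rule countable_subset)
qed

end

definition W2_violation :: "(real \<Rightarrow> real) \<Rightarrow> (real \<Rightarrow> real) \<Rightarrow> real" where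
  "W2_violation F G =
     (LINT u:{u\<in>{0<..<1}. quantile F u > quantile G u}|lborel. (quantile F u - quantile G u)\<^sup>2)"

lemma eps_W2_eq_W2_violation:
  "eps_W2 F G = (if W2 F G = 0 then 0 else W2_violation F G / (W2 F G)\<^sup>2)"
  by (simp add: eps_W2_def W2_violation_def)

lemma W2_violation_nonneg: "0 \<le> W2_violation F G"
  unfolding W2_violation_def set_lebesgue_integral_def by (intro integral_nonneg_AE) auto

lemma eps_W2_nonneg: "0 \<le> eps_W2 F G"
  by (simp add: eps_W2_eq_W2_violation W2_violation_nonneg)

lemma W2_commute: "W2 F G = W2 G F"
  unfolding W2_def by (simp add: power2_commute)

lemma W2_square: "(W2 F G)\<^sup>2 = (LINT u:{0<..<1}|lborel. (quantile F u - quantile G u)\<^sup>2)"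
  unfolding W2_def set_lebesgue_integral_def by (simp add: integral_nonneg_AE)

lemma set_integrable_W2_violation:
  assumes "real_distribution N1" "integrable N1 (\<lambda>x. x\<^sup>2)"
    and "real_distribution N2" "integrable N2 (\<lambda>x. x\<^sup>2)"
  shows "set_integrable lborel {u\<in>{0<..<1}. quantile (cdf N1) u > quantile (cdf N2) u}
           (\<lambda>u. (quantile (cdf N1) u - quantile (cdf N2) u)\<^sup>2)"
proof (rule set_integrable_restrict_space)
  show "set_integrable lborel {0<..<1} (\<lambda>u. (quantile (cdf N1) u - quantile (cdf N2) u)\<^sup>2)"
    using assms by (rule set_integrable_quantile_cdf_diff_square)
  have "{u \<in> space (restrict_space lborel {0<..<1}). quantile (cdf N1) u > quantile (cdf N2) u}
      \<in> sets (restrict_space lborel {0<..<1})"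
    using borel_measurable_quantile_cdf[OF assms(1)] borel_measurable_quantile_cdf[OF assms(3)]
    by measurable
  then show "{u\<in>{0<..<1}. quantile (cdf N1) u > quantile (cdf N2) u}
      \<in> sets (restrict_space lborel {0<..<1})"
    by (simp add: space_restrict_space)
qed

lemma W2_violation_le_W2_square:
  assumes "real_distribution N1" "integrable N1 (\<lambda>x. x\<^sup>2)"
    and "real_distribution N2" "integrable N2 (\<lambda>x. x\<^sup>2)"
  shows "W2_violation (cdf N1) (cdf N2) \<le> (W2 (cdf N1) (cdf N2))\<^sup>2"
  unfolding W2_violation_def W2_square set_lebesgue_integral_def
  using set_integrable_W2_violation[OF assms] set_integrable_quantile_cdf_diff_square[OF assms]
  by (intro integral_mono) (auto simp: set_integrable_def indicator_def)

lemma W2_violation_distr_decreasing_le: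
  assumes N1: "real_distribution_decreasing_map N1 \<psi>" "integrable N1 (\<lambda>x. x\<^sup>2)"
    and N2: "real_distribution_decreasing_map N2 \<psi>" "integrable N2 (\<lambda>x. x\<^sup>2)"
    and lipschitz: "\<And>x y. \<bar>\<psi> x - \<psi> y\<bar> \<le> L * \<bar>x - y\<bar>"
  shows "W2_violation (cdf (distr N2 borel \<psi>)) (cdf (distr N1 borel \<psi>))
           \<le> L\<^sup>2 * W2_violation (cdf N1) (cdf N2)"
proof -
  interpret N1: real_distribution_decreasing_map N1 \<psi> by (fact N1)
  interpret N2: real_distribution_decreasing_map N2 \<psi> by (fact N2)
  define a where "a = quantile (cdf N1)"
  define b where "b = quantile (cdf N2)"
  define A where "A = quantile (cdf (distr N1 borel \<psi>))"
  define B where "B = quantile (cdf (distr N2 borel \<psi>))"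
  define f where "f u = indicator {u\<in>{0<..<1}. a u > b u} u * (a u - b u)\<^sup>2" for u
  define g where "g u = indicator {u\<in>{0<..<1}. B u > A u} u * (B u - A u)\<^sup>2" for u
  have "integrable lborel f"
    using set_integrable_W2_violation[OF N1.real_distribution_axioms N1(2)
        N2.real_distribution_axioms N2(2)]
    unfolding f_def[abs_def] a_def b_def by (simp add: set_integrable_def)
  then have f_reflect: "integrable lborel (\<lambda>u. f (1 - u))"
    using lborel_integrable_real_affine[of f "-1" 1] by simp
  define D where "D = {u \<in> {0<..<1}. A u \<noteq> \<psi> (a (1 - u))}
    \<union> {u \<in> {0<..<1}. B u \<noteq> \<psi> (b (1 - u))}"
  have "countable D"
    unfolding D_def A_def B_def a_def b_def
    using N1.countable_quantile_cdf_distr_map_neq N2.countable_quantile_cdf_distr_map_neq by simp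
  have "g u \<le> L\<^sup>2 * f (1 - u)" if "u \<notin> D" for u
  proof (cases "u \<in> {0<..<1}")
    case True
    then have "A u = \<psi> (a (1 - u))" "B u = \<psi> (b (1 - u))"
      using that by (auto simp: D_def)
    moreover have "(\<psi> x - \<psi> y)\<^sup>2 \<le> L\<^sup>2 * (x - y)\<^sup>2" for x y
      using power_mono[OF lipschitz[of x y] abs_ge_zero, of 2] by (simp add: power_mult_distrib)
    ultimately show ?thesis
      using True
      by (auto simp: f_def g_def indicator_def power2_commute not_le[symmetric] N1.decreasing_le_iff)
  next
    case False
    then show ?thesis by (auto simp: f_def g_def indicator_def)
  qed
  then have "integral\<^sup>L lborel g \<le> integral\<^sup>L lborel (\<lambda>u. L\<^sup>2 * f (1 - u))"
    using f_reflect countable_imp_null_set_lborel[OF \<open>countable D\<close>]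
    by (intro integral_mono_AE') (auto intro: AE_I' simp: f_def)
  also have "\<dots> = L\<^sup>2 * integral\<^sup>L lborel f"
    using lborel_integral_real_affine[of "-1" f 1] by simp
  finally show ?thesis
    by (simp add: W2_violation_def set_lebesgue_integral_def f_def[abs_def] g_def[abs_def]
        a_def b_def A_def B_def)
qed

lemma eps_W2_distr_decreasing_le:
  assumes N1: "real_distribution_decreasing_map N1 \<psi>" "integrable N1 (\<lambda>x. x\<^sup>2)"
    and N2: "real_distribution_decreasing_map N2 \<psi>" "integrable N2 (\<lambda>x. x\<^sup>2)"
    and lipschitz: "\<And>x y. \<bar>\<psi> x - \<psi> y\<bar> \<le> L * \<bar>x - y\<bar>"
    and "0 \<le> C"
    and W2_le: "(W2 (cdf N1) (cdf N2))\<^sup>2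
      \<le> C * (W2 (cdf (distr N1 borel \<psi>)) (cdf (distr N2 borel \<psi>)))\<^sup>2"
  shows "eps_W2 (cdf (distr N2 borel \<psi>)) (cdf (distr N1 borel \<psi>))
    \<le> L\<^sup>2 * C * eps_W2 (cdf N1) (cdf N2)"
proof -
  interpret N1: real_distribution_decreasing_map N1 \<psi> by (fact N1)
  interpret N2: real_distribution_decreasing_map N2 \<psi> by (fact N2)
  define W where "W = W2 (cdf N1) (cdf N2)"
  define W\<psi> where "W\<psi> = W2 (cdf (distr N2 borel \<psi>)) (cdf (distr N1 borel \<psi>))"
  define v where "v = W2_violation (cdf N1) (cdf N2)"
  define v\<psi> where "v\<psi> = W2_violation (cdf (distr N2 borel \<psi>)) (cdf (distr N1 borel \<psi>))"
  have v\<psi>_le: "v\<psi> \<le> L\<^sup>2 * v"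
    unfolding v\<psi>_def v_def using N1 N2 lipschitz by (rule W2_violation_distr_decreasing_le)
  have v_le: "v \<le> W\<^sup>2"
    unfolding v_def W_def
    using N1.real_distribution_axioms N1(2) N2.real_distribution_axioms N2(2)
    by (rule W2_violation_le_W2_square)
  have W_le: "W\<^sup>2 \<le> C * W\<psi>\<^sup>2"
    using W2_le by (simp add: W_def W\<psi>_def W2_commute)
  have "0 \<le> v" "0 \<le> v\<psi>"
    by (simp_all add: v_def v\<psi>_def W2_violation_nonneg)
  consider "W\<psi> = 0" | "W = 0" "W\<psi> \<noteq> 0" | "W \<noteq> 0" "W\<psi> \<noteq> 0"
    by blast
  then have "(if W\<psi> = 0 then 0 else v\<psi> / W\<psi>\<^sup>2) \<le> L\<^sup>2 * C * (if W = 0 then 0 else v / W\<^sup>2)"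
  proof cases
    case 1
    then show ?thesis
      using \<open>0 \<le> C\<close> \<open>0 \<le> v\<close> by simp
  next
    case 2
    then show ?thesis
      using v_le v\<psi>_le \<open>0 \<le> v\<close> \<open>0 \<le> v\<psi>\<close> by simp
  next
    case 3
    have "v\<psi> / W\<psi>\<^sup>2 \<le> L\<^sup>2 * v / W\<psi>\<^sup>2"
      using v\<psi>_le by (simp add: divide_right_mono)
    also have "\<dots> \<le> L\<^sup>2 * v * C / W\<^sup>2"
    proof -
      have "L\<^sup>2 * v * W\<^sup>2 \<le> L\<^sup>2 * v * (C * W\<psi>\<^sup>2)"
        using W_le \<open>0 \<le> v\<close> by (intro mult_left_mono) auto
      then show ?thesis
        using 3 by (simp add: field_simps mult_ac)
    qed
    finally show ?thesis
      using 3 by (simp add: mult_ac)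
  qed
  then show ?thesis
    unfolding eps_W2_eq_W2_violation W_def[symmetric] W\<psi>_def[symmetric] v_def[symmetric]
      v\<psi>_def[symmetric] .
qed

lemma (in prob_space) eps_W2_distfun_decreasing_le:
  assumes X: "random_variable borel X" "integrable M (\<lambda>\<omega>. (X \<omega>)\<^sup>2)"
    and Y: "random_variable borel Y" "integrable M (\<lambda>\<omega>. (Y \<omega>)\<^sup>2)"
    and decreasing: "\<And>x y. x < y \<Longrightarrow> \<psi> y < \<psi> x"
    and lipschitz: "\<And>x y. \<bar>\<psi> x - \<psi> y\<bar> \<le> L * \<bar>x - y\<bar>"
    and "0 \<le> C"
    and W2_le: "(W2 (distfun M X) (distfun M Y))\<^sup>2
      \<le> C * (W2 (distfun M (\<lambda>\<omega>. \<psi> (X \<omega>))) (distfun M (\<lambda>\<omega>. \<psi> (Y \<omega>))))\<^sup>2"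
  shows "eps_W2 (distfun M (\<lambda>\<omega>. \<psi> (Y \<omega>))) (distfun M (\<lambda>\<omega>. \<psi> (X \<omega>)))
    \<le> L\<^sup>2 * C * eps_W2 (distfun M X) (distfun M Y)"
proof -
  have decreasing_map: "real_distribution_decreasing_map (distr M borel Z) \<psi>"
    if "random_variable borel Z" for Z
    using that decreasing
    by (simp add: real_distribution_decreasing_map_def real_distribution_decreasing_map_axioms_def)
  have "\<psi> \<in> borel_measurable borel"
    using decreasing_map[OF X(1)] by (rule real_distribution_decreasing_map.borel_measurable_map)
  then have distfun_comp: "distfun M (\<lambda>\<omega>. \<psi> (Z \<omega>)) = cdf (distr (distr M borel Z) borel \<psi>)"
    if "random_variable borel Z" for Z
    using that by (simp add: distfun_def distr_distr comp_def)
  have square_integrable: "integrable (distr M borel Z) (\<lambda>x. x\<^sup>2)"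
    if "random_variable borel Z" "integrable M (\<lambda>\<omega>. (Z \<omega>)\<^sup>2)" for Z :: "'a \<Rightarrow> real"
    using that integrable_distr_eq[where f="\<lambda>x. x\<^sup>2" and g=Z] by simp
  show ?thesis
    using W2_le unfolding distfun_comp[OF X(1)] distfun_comp[OF Y(1)] unfolding distfun_def
    by (rule eps_W2_distr_decreasing_le[OF decreasing_map[OF X(1)] square_integrable[OF X]
          decreasing_map[OF Y(1)] square_integrable[OF Y] lipschitz \<open>0 \<le> C\<close>])
qed

theorem corollary2p7:
  fixes T :: "real set" and M :: "'a measure"
    and X Y :: "real \<Rightarrow> 'a \<Rightarrow> real" and \<psi> :: "real \<Rightarrow> real"
  assumes "prob_space M"
    and "\<forall>b. \<exists>t\<in>T. t \<ge> b"
    and "\<And>t. t \<in> T \<Longrightarrow> X t \<in> borel_measurable M"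
    and "\<And>t. t \<in> T \<Longrightarrow> Y t \<in> borel_measurable M"
    and "\<And>t. t \<in> T \<Longrightarrow> integrable M (\<lambda>\<omega>. (X t \<omega>)\<^sup>2)"
    and "\<And>t. t \<in> T \<Longrightarrow> integrable M (\<lambda>\<omega>. (Y t \<omega>)\<^sup>2)"
    and "d_ast T M X Y"
    and "\<And>x y. x < y \<Longrightarrow> \<psi> y < \<psi> x"
    and "\<exists>L. \<forall>x y. \<bar>\<psi> x - \<psi> y\<bar> \<le> L * \<bar>x - y\<bar>"
    and "\<And>t. t \<in> T \<Longrightarrow> integrable M (\<lambda>\<omega>. (\<psi> (X t \<omega>))\<^sup>2)"
    and "\<And>t. t \<in> T \<Longrightarrow> integrable M (\<lambda>\<omega>. (\<psi> (Y t \<omega>))\<^sup>2)"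
    and "\<exists>C>0. \<exists>t0\<in>T. \<forall>t\<in>T. t \<ge> t0 \<longrightarrow>
           (W2 (distfun M (X t)) (distfun M (Y t)))\<^sup>2
             \<le> C * (W2 (distfun M (\<lambda>\<omega>. \<psi> (X t \<omega>))) (distfun M (\<lambda>\<omega>. \<psi> (Y t \<omega>))))\<^sup>2"
  shows "d_ast T M (\<lambda>t \<omega>. \<psi> (Y t \<omega>)) (\<lambda>t \<omega>. \<psi> (X t \<omega>))"
proof -
  obtain L where lipschitz: "\<And>x y. \<bar>\<psi> x - \<psi> y\<bar> \<le> L * \<bar>x - y\<bar>"
    using assms(9) by auto
  obtain C t0 where "0 < C" and W2_le: "\<forall>t\<in>T. t \<ge> t0 \<longrightarrow>
      (W2 (distfun M (X t)) (distfun M (Y t)))\<^sup>2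
        \<le> C * (W2 (distfun M (\<lambda>\<omega>. \<psi> (X t \<omega>))) (distfun M (\<lambda>\<omega>. \<psi> (Y t \<omega>))))\<^sup>2"
    using assms(12) by blast
  have bound: "eps_W2 (distfun M (\<lambda>\<omega>. \<psi> (Y t \<omega>))) (distfun M (\<lambda>\<omega>. \<psi> (X t \<omega>)))
      \<le> L\<^sup>2 * C * eps_W2 (distfun M (X t)) (distfun M (Y t))" if "t \<in> T" "t0 \<le> t" for t
    using assms(1) assms(3,5,4,6)[OF \<open>t \<in> T\<close>] assms(8) lipschitz less_imp_le[OF \<open>0 < C\<close>]
      W2_le[rule_format, OF that]
    by (rule prob_space.eps_W2_distfun_decreasing_le)
  let ?eps = "\<lambda>t. eps_W2 (distfun M (X t)) (distfun M (Y t))"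
  let ?eps\<psi> = "\<lambda>t. eps_W2 (distfun M (\<lambda>\<omega>. \<psi> (Y t \<omega>))) (distfun M (\<lambda>\<omega>. \<psi> (X t \<omega>)))"
  have upper: "\<forall>\<^sub>F t in inf at_top (principal T). ?eps\<psi> t \<le> L\<^sup>2 * C * ?eps t"
    unfolding eventually_inf_principal
    using eventually_ge_at_top[of t0]
  proof (rule eventually_mono)
    show "t \<in> T \<longrightarrow> ?eps\<psi> t \<le> L\<^sup>2 * C * ?eps t" if "t0 \<le> t" for t
      using bound[OF _ that] by (intro impI)
  qed
  have lower: "\<forall>\<^sub>F t in inf at_top (principal T). 0 \<le> ?eps\<psi> t"
    by (simp add: eps_W2_nonneg)
  have "((\<lambda>t. L\<^sup>2 * C * ?eps t) \<longlongrightarrow> 0) (inf at_top (principal T))"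
    using assms(7) unfolding d_ast_def by (rule tendsto_mult_right_zero)
  with lower upper have "(?eps\<psi> \<longlongrightarrow> 0) (inf at_top (principal T))"
    by (rule tendsto_sandwich[OF _ _ tendsto_const])
  then show ?thesis
    unfolding d_ast_def .
qed

end
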